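(* Let $g=\frac{\sqrt5-1}2$, $g\le\alpha<\beta\le1$, $x\in[\alpha-1,\alpha)$, $z\in[\beta-1,\beta)$ with $z-x\in\{0,1\}$ or $x+z\in\{0,1\}$. Let $n\ge1$ be such that $T_\alpha^{n-1}(x)<\frac{\beta}{\beta+1}$. Then there is some $k\ge1$ such that $T_\beta^k(z)-T_\alpha^n(x)\in\{0,1\}$ or $T_\alpha^n(x)+T_\beta^k(z)\in\{0,1\}$.
   Context: For $\alpha\in[\tfrac12,1]$, $T_\alpha:[\alpha-1,\alpha)\to[\alpha-1,\alpha)$ is $T_\alpha(x)=\frac1x-\lfloor\frac1x+1-\alpha\rfloor$ for $x\ne0$, $T_\alpha(0)=0$. *)

theory Defs
  imports Complex_Main
begin

definition T :: "real \<Rightarrow> real \<Rightarrow> real" where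
  "T \<alpha> x = (if x = 0 then 0 else 1 / x - of_int \<lfloor>1 / x + 1 - \<alpha>\<rfloor>)"

definition g :: real where
  "g = (sqrt 5 - 1) / 2"

end

theory Submission
  imports Defs
begin

text \<open>Each application of \<open>T\<^sub>\<alpha>\<close> is \<open>y \<mapsto> 1/y\<close> up to an integer translation, so the relation
  ``\<open>w \<equiv> \<plusminus>y\<close> modulo \<open>\<int>\<close>'' is carried along by the maps \<open>T\<^sub>\<alpha>\<close> and \<open>T\<^sub>\<beta>\<close> as soon as the
  reciprocals are related; on the domains \<open>[\<alpha>-1,\<alpha>)\<close> and \<open>[\<beta>-1,\<beta>)\<close> this relation is exactly
  \<open>w - y \<in> {0,1}\<close> or \<open>y + w \<in> {0,1}\<close>. Starting from a matched pair \<open>(y, w)\<close>, a case analysis on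
  \<open>w \<in> {y, -y, y+1, 1-y}\<close> shows that \<open>T\<^sub>\<alpha> y\<close> is matched with some \<open>T\<^sub>\<beta>\<^sup>i w\<close>, \<open>i \<ge> 1\<close>,
  except possibly when \<open>w = 1 - y\<close> with \<open>y \<ge> \<beta>/(\<beta>+1)\<close>; then at least \<open>T\<^sub>\<alpha>\<^sup>2 y\<close> is matched
  with some \<open>T\<^sub>\<beta>\<^sup>i w\<close>. So along the \<open>T\<^sub>\<alpha>\<close>-orbit of \<open>x\<close> a matching can only be skipped right
  after a point \<open>\<ge> \<beta>/(\<beta>+1)\<close>.\<close>

definition pm_cong :: "real \<Rightarrow> real \<Rightarrow> bool" where
  "pm_cong u v \<longleftrightarrow> (\<exists>m::int. v = u + of_int m \<or> v = - u + of_int m)"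

definition matched :: "real \<Rightarrow> real \<Rightarrow> bool" where
  "matched y w \<longleftrightarrow> w - y \<in> {0, 1} \<or> y + w \<in> {0, 1}"

lemma pm_cong_add_int: "pm_cong u (u + of_int m)"
  unfolding pm_cong_def by blast

lemma pm_cong_neg_add_int: "pm_cong u (- u + of_int m)"
  unfolding pm_cong_def by blast

lemma T_eq_inverse_add_int: "\<exists>m::int. T a y = 1 / y + of_int m"
  by (intro exI[of _ "if y = 0 then 0 else - \<lfloor>1 / y + 1 - a\<rfloor>"]) (simp add: T_def)

lemma T_eq_inverse_minus:
  assumes "y \<noteq> 0" "of_int c \<le> 1 / y + 1 - a" "1 / y + 1 - a < of_int c + 1"
  shows "T a y = 1 / y - of_int c"
proof -
  have "\<lfloor>1 / y + 1 - a\<rfloor> = c" using assms(2,3) by (simp add: floor_eq_iff)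
  then show ?thesis using assms(1) by (simp add: T_def)
qed

lemma pm_cong_T_T:
  assumes "pm_cong (1 / u) (1 / v)"
  shows "pm_cong (T a u) (T b v)"
proof -
  obtain m1 :: int where m1: "T a u = 1 / u + m1" using T_eq_inverse_add_int by blast
  obtain m2 :: int where m2: "T b v = 1 / v + m2" using T_eq_inverse_add_int by blast
  obtain k :: int where "1 / v = 1 / u + k \<or> 1 / v = - (1 / u) + k"
    using assms unfolding pm_cong_def by blast
  then show ?thesis
  proof
    assume "1 / v = 1 / u + k"
    then have "T b v = T a u + of_int (k + m2 - m1)" using m1 m2 by simp
    then show ?thesis using pm_cong_add_int by metis
  next
    assume "1 / v = - (1 / u) + k"
    then have "T b v = - T a u + of_int (k + m1 + m2)" using m1 m2 by simp
    then show ?thesis using pm_cong_neg_add_int by metis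
  qed
qed

lemma T_in_domain:
  assumes "0 < a" "a \<le> 1" "a - 1 \<le> y" "y < a"
  shows "a - 1 \<le> T a y \<and> T a y < a"
proof (cases "y = 0")
  case True
  then show ?thesis using assms by (simp add: T_def)
next
  case False
  then have "T a y = 1 / y - of_int \<lfloor>1 / y + 1 - a\<rfloor>" by (simp add: T_def)
  moreover have "of_int \<lfloor>1 / y + 1 - a\<rfloor> \<le> 1 / y + 1 - a" "1 / y + 1 - a < of_int \<lfloor>1 / y + 1 - a\<rfloor> + 1"
    by linarith+
  ultimately show ?thesis by linarith
qed

lemma funpow_T_in_domain:
  assumes "0 < a" "a \<le> 1" "a - 1 \<le> y" "y < a"
  shows "a - 1 \<le> (T a ^^ n) y \<and> (T a ^^ n) y < a"
  by (induction n) (use assms T_in_domain in auto)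

lemma g_gt_half: "1 / 2 < g"
proof -
  have "2 < sqrt 5" by (rule real_less_rsqrt) simp
  then show ?thesis unfolding g_def by simp
qed

lemma g_mult_one_plus_g: "g * (1 + g) = 1"
proof -
  have "sqrt 5 * sqrt 5 = 5" by simp
  then show ?thesis unfolding g_def by (simp add: field_simps)
qed

lemma nat_induct_skip:
  assumes "P 0"
    and step: "\<And>j. P j \<Longrightarrow> P (Suc j) \<or> Q j \<and> P (Suc (Suc j))"
    and "\<not> Q n"
  shows "P (Suc n)"
proof -
  have "P j \<or> 0 < j \<and> Q (j - 1) \<and> P (Suc j)" for j
    by (induction j) (use assms(1) step in auto)
  then show ?thesis using step assms(3) by blast
qed

locale alpha_beta_pair =
  fixes \<alpha> \<beta> :: real
  assumes g_le_alpha: "g \<le> \<alpha>" and alpha_lt_beta: "\<alpha> < \<beta>" and beta_le_one: "\<beta> \<le> 1"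
begin

lemma alpha_gt_half: "1 / 2 < \<alpha>"
  using g_gt_half g_le_alpha by linarith

lemma inverse_alpha_le: "1 / \<alpha> \<le> 1 + \<alpha>"
proof -
  have "g * (1 + g) \<le> \<alpha> * (1 + \<alpha>)"
    using g_le_alpha g_gt_half by (intro mult_mono) auto
  then show ?thesis using g_mult_one_plus_g alpha_gt_half by (simp add: field_simps)
qed

lemma pm_cong_imp_matched:
  assumes "\<alpha> - 1 \<le> y" "y < \<alpha>" "\<beta> - 1 \<le> w" "w < \<beta>" "pm_cong y w"
  shows "matched y w"
proof -
  obtain m :: int where m: "w = y + m \<or> w = - y + m" using assms(5) pm_cong_def by auto
  have "- 1 < real_of_int m" "real_of_int m < 2"
    using m assms(1-4) alpha_gt_half alpha_lt_beta beta_le_one by auto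
  then have "- 1 < m" "m < 2" by simp_all
  then have "m = 0 \<or> m = 1" by arith
  then show ?thesis using m unfolding matched_def by auto
qed

lemma pm_cong_T_funpow2_of_eq_add_one:
  assumes "\<alpha> - 1 \<le> y" "w = y + 1" "w < \<beta>"
  shows "pm_cong (T \<alpha> y) ((T \<beta> ^^ 2) w)"
proof -
  have w: "\<alpha> \<le> w" "w < 1" using assms beta_le_one by auto
  then have "0 < w" using alpha_gt_half by linarith
  have "1 < 1 / w" using w \<open>0 < w\<close> by (simp add: field_simps)
  moreover have "1 / w \<le> 1 / \<alpha>" using w alpha_gt_half by (simp add: field_simps)
  ultimately have "\<beta> \<le> 1 / w" "1 / w < \<beta> + 1"
    using inverse_alpha_le alpha_lt_beta beta_le_one by linarith+
  then have "T \<beta> w = 1 / w - 1" using T_eq_inverse_minus[of w 1 \<beta>] \<open>0 < w\<close> by simp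
  moreover have "1 / (1 / w - 1) = - (1 / y) + of_int (- 1)"
    using assms(2) w \<open>0 < w\<close> by (simp add: field_simps)
  ultimately have "pm_cong (T \<alpha> y) (T \<beta> (T \<beta> w))"
    using pm_cong_T_T pm_cong_neg_add_int by metis
  then show ?thesis by (simp add: numeral_2_eq_2)
qed

lemma pm_cong_T_funpow2_of_eq_one_minus:
  assumes "0 < y" "y < \<beta> / (\<beta> + 1)" "w = 1 - y"
  shows "pm_cong (T \<alpha> y) ((T \<beta> ^^ 2) w)"
proof -
  have "0 < \<beta>" using alpha_gt_half alpha_lt_beta by linarith
  then have "y * (\<beta> + 1) < \<beta>" using assms(2) by (simp add: field_simps)
  moreover have "w * (\<beta> + 1) = \<beta> + 1 - y * (\<beta> + 1)" unfolding assms(3) by (simp add: algebra_simps)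
  ultimately have "1 < w * (\<beta> + 1)" by linarith
  moreover have "0 < \<beta> + 1" using \<open>0 < \<beta>\<close> by simp
  ultimately have "0 < w" by (smt (verit) zero_less_mult_iff)
  then have "1 / w < \<beta> + 1" using \<open>1 < w * (\<beta> + 1)\<close> by (simp add: field_simps)
  moreover have "1 < 1 / w" using assms(1,3) \<open>0 < w\<close> by (simp add: field_simps)
  moreover have "\<beta> \<le> 1 / w" using \<open>1 < 1 / w\<close> beta_le_one by linarith
  ultimately have "T \<beta> w = 1 / w - 1" using T_eq_inverse_minus[of w 1 \<beta>] \<open>0 < w\<close> by simp
  moreover have "1 / (1 / w - 1) = 1 / y + of_int (- 1)"
    using assms(1,3) \<open>0 < w\<close> by (simp add: field_simps)
  ultimately have "pm_cong (T \<alpha> y) (T \<beta> (T \<beta> w))"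
    using pm_cong_T_T pm_cong_add_int by metis
  then show ?thesis by (simp add: numeral_2_eq_2)
qed

lemma beta_ratio_leD:
  assumes "\<beta> / (\<beta> + 1) \<le> y"
  shows "0 < y" and "y * (\<beta> + 1) \<ge> \<beta>"
proof -
  have "0 < \<beta>" using alpha_gt_half alpha_lt_beta by linarith
  then show "0 < y" using assms by (smt (verit) divide_pos_pos)
  show "y * (\<beta> + 1) \<ge> \<beta>" using assms \<open>0 < \<beta>\<close> by (simp add: field_simps)
qed

lemma floor_inverse_of_beta_ratio_le:
  assumes "y < \<alpha>" "\<beta> / (\<beta> + 1) \<le> y"
  shows "\<lfloor>1 / y + 1 - \<alpha>\<rfloor> = 1 \<or> \<lfloor>1 / y + 1 - \<alpha>\<rfloor> = 2"
proof -
  have "0 < y" "\<beta> \<le> y * (\<beta> + 1)" using beta_ratio_leD assms(2) by auto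
  have "1 / \<alpha> < 1 / y" using \<open>0 < y\<close> assms(1) by (simp add: field_simps)
  moreover have "\<alpha> \<le> 1 / \<alpha>"
    using alpha_gt_half alpha_lt_beta beta_le_one mult_mono[of \<alpha> 1 \<alpha> 1] by (simp add: field_simps)
  moreover have "1 / y \<le> 1 + 1 / \<beta>"
    using \<open>\<beta> \<le> y * (\<beta> + 1)\<close> \<open>0 < y\<close> alpha_gt_half alpha_lt_beta by (simp add: field_simps)
  moreover have "1 / \<beta> < 1 / \<alpha>" using alpha_gt_half alpha_lt_beta by (simp add: field_simps)
  ultimately have "1 \<le> \<lfloor>1 / y + 1 - \<alpha>\<rfloor>" "\<lfloor>1 / y + 1 - \<alpha>\<rfloor> \<le> 2"
    using inverse_alpha_le by (simp_all add: le_floor_iff floor_le_iff)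
  then show ?thesis by linarith
qed

lemma pm_cong_T_T_T_of_eq_one_minus:
  assumes "y < \<alpha>" "0 < y" "w = 1 - y" "\<lfloor>1 / y + 1 - \<alpha>\<rfloor> = 1"
  shows "pm_cong (T \<alpha> (T \<alpha> y)) (T \<beta> w)"
proof -
  have "0 < w" using assms(1-3) alpha_lt_beta beta_le_one by auto
  have "T \<alpha> y = 1 / y - 1" using assms(2,4) by (simp add: T_def)
  moreover have "1 / w = 1 / (1 / y - 1) + of_int 1"
    using assms(2,3) \<open>0 < w\<close> by (simp add: field_simps)
  ultimately show ?thesis using pm_cong_T_T pm_cong_add_int by metis
qed

lemma pm_cong_T_T_funpow2_of_eq_one_minus:
  assumes "y < \<alpha>" "\<beta> / (\<beta> + 1) \<le> y" "w = 1 - y" "\<lfloor>1 / y + 1 - \<alpha>\<rfloor> = 2"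
  shows "pm_cong (T \<alpha> (T \<alpha> y)) ((T \<beta> ^^ 2) w)"
proof -
  have "0 < y" "\<beta> \<le> y * (\<beta> + 1)" using beta_ratio_leD assms(2) by auto
  have "0 < w" using assms(1,3) alpha_lt_beta beta_le_one by auto
  have Ty: "T \<alpha> y = 1 / y - 2" using \<open>0 < y\<close> assms(4) by (simp add: T_def)
  have "1 + \<alpha> \<le> 1 / y" using assms(4) by linarith
  then have "y * (1 + \<alpha>) \<le> 1" using \<open>0 < y\<close> alpha_gt_half by (simp add: field_simps)
  then have "\<alpha> \<le> w * (1 + \<alpha>)" unfolding assms(3) by (simp add: algebra_simps)
  then have "1 / w \<le> 1 + 1 / \<alpha>" using \<open>0 < w\<close> alpha_gt_half by (simp add: field_simps)
  moreover have "w * (1 + \<beta>) \<le> 1"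
    using \<open>\<beta> \<le> y * (\<beta> + 1)\<close> unfolding assms(3) by (simp add: algebra_simps)
  then have "1 + \<beta> \<le> 1 / w" using \<open>0 < w\<close> by (simp add: field_simps)
  ultimately have Tw: "T \<beta> w = 1 / w - 2"
    using T_eq_inverse_minus[of w 2 \<beta>] inverse_alpha_le alpha_gt_half alpha_lt_beta \<open>0 < w\<close>
    by simp
  have "pm_cong (1 / T \<alpha> y) (1 / T \<beta> w)"
  proof (cases "y = 1 / 2")
    case True
    \<comment> \<open>Here both reciprocals are the junk value \<open>1 / 0 = 0\<close>, so the identity below fails.\<close>
    have "T \<alpha> y = 0" using Ty unfolding True by simp
    moreover have "T \<beta> w = 0" using Tw unfolding assms(3) True by simp
    ultimately show ?thesis using pm_cong_add_int[of 0 0] by simp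
  next
    case False
    then have "1 / (1 / w - 2) = - (1 / (1 / y - 2)) + of_int (- 1)"
      unfolding assms(3) using \<open>0 < y\<close> \<open>0 < w\<close> assms(3) by (simp add: field_simps)
    then show ?thesis unfolding Ty Tw using pm_cong_neg_add_int by metis
  qed
  then show ?thesis using pm_cong_T_T by (simp add: numeral_2_eq_2)
qed

lemma pm_cong_step:
  assumes "\<alpha> - 1 \<le> y" "y < \<alpha>" "w < \<beta>" "w = y \<or> w = - y \<or> w = y + 1 \<or> w = 1 - y"
  shows "(\<exists>i\<ge>1. pm_cong (T \<alpha> y) ((T \<beta> ^^ i) w))
    \<or> \<beta> / (\<beta> + 1) \<le> y \<and> (\<exists>i\<ge>1. pm_cong (T \<alpha> (T \<alpha> y)) ((T \<beta> ^^ i) w))"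
proof -
  consider "w = y \<or> w = - y" | "w = y + 1" | "w = 1 - y"
    using assms(4) by blast
  then show ?thesis
  proof cases
    case 1
    then have "1 / w = 1 / y + of_int 0 \<or> 1 / w = - (1 / y) + of_int 0" by auto
    then have "pm_cong (T \<alpha> y) (T \<beta> w)"
      using pm_cong_T_T pm_cong_add_int pm_cong_neg_add_int by metis
    then show ?thesis by (intro disjI1 exI[of _ 1]) simp
  next
    case 2
    then show ?thesis
      using pm_cong_T_funpow2_of_eq_add_one assms(1,3) by (intro disjI1 exI[of _ 2]) simp
  next
    case 3
    then have "0 < y" using assms(3) beta_le_one by linarith
    show ?thesis
    proof (cases "y < \<beta> / (\<beta> + 1)")
      case True
      then show ?thesis
        using pm_cong_T_funpow2_of_eq_one_minus \<open>0 < y\<close> 3 by (intro disjI1 exI[of _ 2]) simp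
    next
      case False
      then consider "\<lfloor>1 / y + 1 - \<alpha>\<rfloor> = 1" | "\<lfloor>1 / y + 1 - \<alpha>\<rfloor> = 2"
        using floor_inverse_of_beta_ratio_le assms(2) by fastforce
      then show ?thesis
      proof cases
        case 1
        then have "pm_cong (T \<alpha> (T \<alpha> y)) ((T \<beta> ^^ 1) w)"
          using pm_cong_T_T_T_of_eq_one_minus assms(2) \<open>0 < y\<close> 3 by simp
        then show ?thesis using False by (intro disjI2) (auto intro: exI[of _ 1])
      next
        case 2
        then show ?thesis using pm_cong_T_T_funpow2_of_eq_one_minus assms(2) False 3
          by (intro disjI2) (auto intro: exI[of _ 2])
      qed
    qed
  qed
qed

lemma matched_step:
  assumes "\<alpha> - 1 \<le> y" "y < \<alpha>" "\<beta> - 1 \<le> w" "w < \<beta>" "matched y w"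
  shows "(\<exists>i\<ge>1. matched (T \<alpha> y) ((T \<beta> ^^ i) w))
    \<or> \<beta> / (\<beta> + 1) \<le> y \<and> (\<exists>i\<ge>1. matched (T \<alpha> (T \<alpha> y)) ((T \<beta> ^^ i) w))"
proof -
  have "0 < \<alpha>" "\<alpha> \<le> 1" "0 < \<beta>"
    using alpha_gt_half alpha_lt_beta beta_le_one by auto
  then have "\<alpha> - 1 \<le> T \<alpha> y \<and> T \<alpha> y < \<alpha>" "\<alpha> - 1 \<le> T \<alpha> (T \<alpha> y) \<and> T \<alpha> (T \<alpha> y) < \<alpha>"
    and "\<beta> - 1 \<le> (T \<beta> ^^ i) w \<and> (T \<beta> ^^ i) w < \<beta>" for i
    using T_in_domain funpow_T_in_domain beta_le_one assms(1-4) by blast+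
  moreover have "w = y \<or> w = - y \<or> w = y + 1 \<or> w = 1 - y"
    using assms(5) unfolding matched_def by auto
  ultimately show ?thesis
    using pm_cong_step[of y w] pm_cong_imp_matched assms(1,2,4) by meson
qed

lemma matched_along_orbit:
  assumes "\<alpha> - 1 \<le> x" "x < \<alpha>" "\<beta> - 1 \<le> z" "z < \<beta>" "matched x z"
    and "(T \<alpha> ^^ n) x < \<beta> / (\<beta> + 1)"
  shows "\<exists>k\<ge>1. matched ((T \<alpha> ^^ Suc n) x) ((T \<beta> ^^ k) z)"
proof -
  define P where "P j \<longleftrightarrow> (\<exists>m. matched ((T \<alpha> ^^ j) x) ((T \<beta> ^^ m) z) \<and> (0 < j \<longrightarrow> 0 < m))" for j
  have "P (Suc n)"
  proof (rule nat_induct_skip[where Q = "\<lambda>j. \<beta> / (\<beta> + 1) \<le> (T \<alpha> ^^ j) x"])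
    show "P 0" unfolding P_def using assms(5) by (intro exI[of _ 0]) simp
  next
    fix j
    assume "P j"
    then obtain m where m: "matched ((T \<alpha> ^^ j) x) ((T \<beta> ^^ m) z)" unfolding P_def by blast
    have "0 < \<alpha>" "0 < \<beta>" using alpha_gt_half alpha_lt_beta by auto
    then have "\<alpha> - 1 \<le> (T \<alpha> ^^ j) x \<and> (T \<alpha> ^^ j) x < \<alpha>" "\<beta> - 1 \<le> (T \<beta> ^^ m) z \<and> (T \<beta> ^^ m) z < \<beta>"
      using funpow_T_in_domain assms(1-4) alpha_lt_beta beta_le_one by auto
    with m have "(\<exists>i\<ge>1. matched ((T \<alpha> ^^ Suc j) x) ((T \<beta> ^^ (i + m)) z))
      \<or> \<beta> / (\<beta> + 1) \<le> (T \<alpha> ^^ j) x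
        \<and> (\<exists>i\<ge>1. matched ((T \<alpha> ^^ Suc (Suc j)) x) ((T \<beta> ^^ (i + m)) z))"
      using matched_step by (simp add: funpow_add)
    then show "P (Suc j) \<or> \<beta> / (\<beta> + 1) \<le> (T \<alpha> ^^ j) x \<and> P (Suc (Suc j))"
      unfolding P_def by (metis add_gr_0 less_le_trans zero_less_one)
  qed (use assms(6) in simp)
  then show ?thesis unfolding P_def by (auto simp: Suc_le_eq)
qed

end

theorem lemma4p3:
  fixes \<alpha> \<beta> x z :: real and n :: nat
  assumes "g \<le> \<alpha>" and "\<alpha> < \<beta>" and "\<beta> \<le> 1"
    and "\<alpha> - 1 \<le> x" and "x < \<alpha>"
    and "\<beta> - 1 \<le> z" and "z < \<beta>"
    and "z - x \<in> {0, 1} \<or> x + z \<in> {0, 1}"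
    and "n \<ge> 1"
    and "(T \<alpha> ^^ (n - 1)) x < \<beta> / (\<beta> + 1)"
  shows "\<exists>k\<ge>1. (T \<beta> ^^ k) z - (T \<alpha> ^^ n) x \<in> {0, 1}
              \<or> (T \<alpha> ^^ n) x + (T \<beta> ^^ k) z \<in> {0, 1}"
proof -
  interpret alpha_beta_pair \<alpha> \<beta> using assms(1-3) by unfold_locales
  obtain n' where "n = Suc n'" using assms(9) by (cases n) auto
  then show ?thesis
    using matched_along_orbit[of x z n'] assms(4-8,10) unfolding matched_def by simp
qed

end
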